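(* Let $X$ be a countable set, let $S=(S_1,\dots,S_m)$ be any random variable on $X^m$, and let $n,k_{\max}$ be nonnegative integers with $n\ge1$ and $n+k_{\max}\le m$. Then there exists an integer $k$ with $0\le k\le k_{\max}$ such that $$\mathbb E_{A,B}\big[\mathrm{Cor}(S_A\mid S_B)\big]\le\frac{n(n-1)}{2(k_{\max}+1)}\cdot\mathbb E_{i,B'}\big[I(S_i;S_{B'})\big],$$ where on the left $A$ is a uniformly random $n$-element subset of $[m]$ and $B$ is a uniformly random $k$-element subset of $[m]\setminus A$, and on the right $i$ is uniform on $[m]$ and $B'$ is a uniformly random $(n+k_{\max}-1)$-element subset of $[m]\setminus\{i\}$.
   Context: For $A\subseteq[m]$, $S_A$ denotes the tuple $(S_a)_{a\in A}$. The multivariate total correlation of random variables $x_1,\dots,x_n$ with joint law $\mathcal P$ and marginals $\mathcal P_1,\dots,\mathcal P_n$ is $\mathrm{Cor}(x_1,\dots,x_n)=\mathrm{KL}(\mathcal P\,\|\,\mathcal P_1\times\dots\times\mathcal P_n)$. For a further random variable $y$, $\mathrm{Cor}(x_1,\dots,x_n\mid y)=\mathbb E_{y}[\mathrm{Cor}(x_1|y,\dots,x_n|y)]$, i.e. the expectation over $y$ of the total correlation of the conditional joint law given $y$. $\mathrm{Cor}(S_A\mid S_B)$ means the conditional total correlation of the coordinates $(S_a)_{a\in A}$ given $S_B$. $I(\cdot;\cdot)$ is mutual information (in nats). *)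

theory Defs
  imports "HOL-Probability.Probability"
begin

text \<open>Pointwise KL integrand for probability mass functions, written so that every
  term is nonnegative: p ln(p/q) - p + q, with 0 ln 0 = 0 and p ln(p/0) = infinity.
  Since both laws have total mass 1, summing these terms gives exactly the
  KL divergence sum p ln(p/q), with value in [0, infinity].\<close>
definition kl_term :: "real \<Rightarrow> real \<Rightarrow> ennreal" where
  "kl_term p q = (if p = 0 then ennreal q else if q = 0 then \<infinity>
                  else ennreal (p * ln (p / q) - p + q))"

definition KL_pmf :: "'a pmf \<Rightarrow> 'a pmf \<Rightarrow> ennreal" where
  "KL_pmf P Q = (\<integral>\<^sup>+ x. kl_term (pmf P x) (pmf Q x) \<partial>count_space UNIV)"

definition proj :: "nat set \<Rightarrow> (nat \<Rightarrow> 'x) \<Rightarrow> (nat \<Rightarrow> 'x)" where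
  "proj A s = (\<lambda>a. if a \<in> A then s a else undefined)"

definition total_cor :: "(nat \<Rightarrow> 'x) pmf \<Rightarrow> nat set \<Rightarrow> ennreal" where
  "total_cor P A = KL_pmf (map_pmf (proj A) P)
                          (Pi_pmf A undefined (\<lambda>a. map_pmf (\<lambda>s. s a) P))"

definition cond_total_cor :: "(nat \<Rightarrow> 'x) pmf \<Rightarrow> nat set \<Rightarrow> nat set \<Rightarrow> ennreal" where
  "cond_total_cor P A B =
     (\<integral>\<^sup>+ y. total_cor (cond_pmf P {s. proj B s = y}) A \<partial>measure_pmf (map_pmf (proj B) P))"

definition mutual_info_pmf :: "'s pmf \<Rightarrow> ('s \<Rightarrow> 'a) \<Rightarrow> ('s \<Rightarrow> 'b) \<Rightarrow> ennreal" where
  "mutual_info_pmf P f g = KL_pmf (map_pmf (\<lambda>s. (f s, g s)) P)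
                                  (pair_pmf (map_pmf f P) (map_pmf g P))"

definition avg :: "'a set \<Rightarrow> ('a \<Rightarrow> ennreal) \<Rightarrow> ennreal" where
  "avg F f = (\<Sum>x\<in>F. f x) / of_nat (card F)"

end

theory Submission
  imports Defs
begin

text \<open>Removing the points of A one at a time, the chain rule writes Cor(S_A | S_B) as a
  sum of conditional mutual informations I(S_a; S_T | S_B). Averaged over random A and B,
  the left-hand side for a given k becomes the sum over j < n of G(j, k), the average of
  I(S_i; S_T | S_B) over a random i, a random k-set B and a random j-set T. By the chain
  rule for mutual information G(j, k) = F(k + j) - F(k), where F(t) is the average of
  I(S_i; S_T) over random t-sets T. Hence F is nondecreasing, and an averaging argument
  over k \<le> kmax produces a k for which these increments are small.\<close>

section \<open>KL divergence of discrete laws\<close>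

lemma kl_real_nonneg:
  fixes p q :: real
  assumes "p > 0" "q > 0"
  shows "0 \<le> p * ln (p / q) - p + q"
proof -
  have "ln (q / p) \<le> q / p - 1" using assms by (intro ln_le_minus_one) auto
  then have "p * ln (q / p) \<le> p * (q / p - 1)" using assms by (intro mult_left_mono) auto
  moreover have "ln (q / p) = - ln (p / q)" using assms by (simp add: ln_div)
  ultimately show ?thesis using assms by (simp add: algebra_simps)
qed

lemma kl_term_pos: "p > 0 \<Longrightarrow> q > 0 \<Longrightarrow> kl_term p q = ennreal (p * ln (p / q) - p + q)"
  by (simp add: kl_term_def)

lemma kl_term_self: "p \<ge> 0 \<Longrightarrow> kl_term p p = 0"
  by (simp add: kl_term_def)

text \<open>Scaling the two arguments by a and c changes kl_term by the signed amount
  a ln(a/c) b + (c - a) d; its positive and negative parts are put on opposite sides.\<close>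
lemma kl_term_mult:
  fixes a b c d :: real
  assumes a: "a > 0" and c: "c > 0" and b: "b \<ge> 0" and d: "d \<ge> 0"
  defines "r \<equiv> a * ln (a / c)"
  shows "kl_term (a * b) (c * d) + ennreal (max (- r) 0 * b) + ennreal (max (a - c) 0 * d)
       = ennreal a * kl_term b d + ennreal (max r 0 * b) + ennreal (max (c - a) 0 * d)"
proof -
  consider "b = 0" | "b > 0" "d = 0" | "b > 0" "d > 0" using b d by linarith
  then show ?thesis
  proof cases
    case 1
    have "c * d + max (a - c) 0 * d = a * d + max (c - a) 0 * d" by (simp add: max_def algebra_simps)
    then show ?thesis using 1 a c d
      by (simp add: kl_term_def ennreal_mult[symmetric] ennreal_plus[symmetric] del: ennreal_plus)
  next
    case 2
    then show ?thesis using a c by (simp add: kl_term_def ennreal_mult_top)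
  next
    case 3
    have "ln (a * b / (c * d)) = ln (a / c) + ln (b / d)" using a c 3 by (simp add: ln_div ln_mult)
    then have "(a * b * ln (a * b / (c * d)) - a * b + c * d) + max (- r) 0 * b + max (a - c) 0 * d
             = a * (b * ln (b / d) - b + d) + max r 0 * b + max (c - a) 0 * d"
      by (simp add: r_def max_def algebra_simps)
    moreover have "0 \<le> a * b * ln (a * b / (c * d)) - a * b + c * d" "0 \<le> b * ln (b / d) - b + d"
      using a c 3 by (auto intro: kl_real_nonneg)
    moreover have "a * b > 0" "c * d > 0" using a c 3 by simp_all
    ultimately show ?thesis using a b d
      by (simp add: kl_term_pos 3 ennreal_mult[symmetric] ennreal_plus[symmetric] del: ennreal_plus)
  qed
qed

lemma kl_term_add_neg_parts:
  fixes a c :: real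
  assumes "a > 0" "c > 0"
  defines "r \<equiv> a * ln (a / c)"
  shows "ennreal (max r 0) + ennreal (max (c - a) 0)
       = kl_term a c + (ennreal (max (- r) 0) + ennreal (max (a - c) 0))"
proof -
  have nonneg: "0 \<le> r - a + c" using kl_real_nonneg[OF assms(1,2)] by (simp add: r_def)
  have "ennreal (max r 0) + ennreal (max (c - a) 0) = ennreal (max r 0 + max (c - a) 0)"
    by (rule ennreal_plus[symmetric]) auto
  also have "max r 0 + max (c - a) 0 = (r - a + c) + max (- r) 0 + max (a - c) 0"
    by (simp add: max_def)
  also have "ennreal \<dots> = ennreal (r - a + c) + (ennreal (max (- r) 0) + ennreal (max (a - c) 0))"
    using nonneg by (metis add.assoc ennreal_plus max.cobounded2 add_nonneg_nonneg)
  also have "ennreal (r - a + c) = kl_term a c" using assms by (simp add: r_def kl_term_pos)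
  finally show ?thesis .
qed

lemma nn_integral_count_space_ge_point: "(f y :: ennreal) \<le> (\<integral>\<^sup>+x. f x \<partial>count_space UNIV)"
proof -
  have "(\<integral>\<^sup>+x. f x * indicator {y} x \<partial>count_space UNIV) \<le> (\<integral>\<^sup>+x. f x \<partial>count_space UNIV)"
    by (intro nn_integral_mono) (auto simp: indicator_def)
  then show ?thesis by (simp add: nn_integral_indicator_finite)
qed

lemma nn_integral_pmf_UNIV: "(\<integral>\<^sup>+y. ennreal (pmf p y) \<partial>count_space UNIV) = 1"
  by (simp add: nn_integral_pmf measure_pmf.emeasure_space_1[simplified])

lemma nn_integral_kl_term_mult:
  fixes a c :: real
  assumes a: "a \<ge> 0" and c: "c \<ge> 0"
  shows "(\<integral>\<^sup>+y. kl_term (a * pmf p y) (c * pmf q y) \<partial>count_space UNIV)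
       = kl_term a c + ennreal a * KL_pmf p q"
proof -
  let ?L = "\<integral>\<^sup>+y. kl_term (a * pmf p y) (c * pmf q y) \<partial>count_space UNIV"
  have mass: "(\<integral>\<^sup>+y. ennreal (x * pmf p' y) \<partial>count_space UNIV) = ennreal x" if "x \<ge> 0" for x p'
    using that by (simp add: ennreal_mult nn_integral_cmult nn_integral_pmf_UNIV)
  consider "a = 0" | "a > 0" "c = 0" | "a > 0" "c > 0" using a c by linarith
  then show ?thesis
  proof cases
    case 1
    then show ?thesis using mass c by (simp add: kl_term_def)
  next
    case 2
    obtain y where "pmf p y > 0" using set_pmf_not_empty[of p] by (auto simp: set_pmf_eq')
    then have "kl_term (a * pmf p y) (c * pmf q y) = \<infinity>" using 2 by (simp add: kl_term_def)
    then have "?L = \<infinity>"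
      using nn_integral_count_space_ge_point[of "\<lambda>y. kl_term (a * pmf p y) (c * pmf q y)" y]
      by (simp add: top_unique)
    then show ?thesis using 2 by (simp add: kl_term_def)
  next
    case 3
    define r where "r = a * ln (a / c)"
    define neg where "neg = ennreal (max (- r) 0) + ennreal (max (a - c) 0)"
    have "?L + neg = (\<integral>\<^sup>+y. kl_term (a * pmf p y) (c * pmf q y) + ennreal (max (- r) 0 * pmf p y)
                          + ennreal (max (a - c) 0 * pmf q y) \<partial>count_space UNIV)"
      by (simp add: neg_def nn_integral_add mass add.assoc)
    also have "\<dots> = (\<integral>\<^sup>+y. ennreal a * kl_term (pmf p y) (pmf q y) + ennreal (max r 0 * pmf p y)
                          + ennreal (max (c - a) 0 * pmf q y) \<partial>count_space UNIV)"
      using 3 by (intro nn_integral_cong) (simp add: kl_term_mult r_def)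
    also have "\<dots> = ennreal a * KL_pmf p q + (ennreal (max r 0) + ennreal (max (c - a) 0))"
      by (simp add: KL_pmf_def nn_integral_add nn_integral_cmult mass add.assoc)
    also have "ennreal (max r 0) + ennreal (max (c - a) 0) = kl_term a c + neg"
      using kl_term_add_neg_parts[OF 3] by (simp add: neg_def r_def)
    finally have "?L + neg = (kl_term a c + ennreal a * KL_pmf p q) + neg" by (simp add: ac_simps)
    then show ?thesis by (simp add: neg_def ennreal_add_left_cancel add.commute[of _ neg])
  qed
qed

definition cond_snd_pmf :: "('a \<times> 'b) pmf \<Rightarrow> 'a \<Rightarrow> 'b pmf" where
  "cond_snd_pmf P x = map_pmf snd (cond_pmf P {z. fst z = x})"

lemma pmf_cond_snd_pmf:
  assumes "x \<in> set_pmf (map_pmf fst P)"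
  shows "pmf (cond_snd_pmf P x) y = pmf P (x, y) / pmf (map_pmf fst P) x"
proof -
  have ne: "set_pmf P \<inter> {z. fst z = x} \<noteq> {}" using assms by auto
  have "pmf (cond_snd_pmf P x) y = measure (cond_pmf P {z. fst z = x}) (snd -` {y})"
    by (simp add: cond_snd_pmf_def pmf_map)
  also have "\<dots> = measure P ({z. fst z = x} \<inter> snd -` {y}) / measure P {z. fst z = x}"
    using ne by (simp add: cond_pmf.rep_eq emeasure_measure_pmf_not_zero)
  also have "{z. fst z = x} \<inter> snd -` {y} = {(x, y)}" by auto
  also have "measure P {z. fst z = x} = pmf (map_pmf fst P) x" by (simp add: pmf_map vimage_def)
  finally show ?thesis by (simp add: measure_pmf_single)
qed

lemma pmf_pair_cond_snd_pmf: "pmf P (x, y) = pmf (map_pmf fst P) x * pmf (cond_snd_pmf P x) y"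
proof (cases "x \<in> set_pmf (map_pmf fst P)")
  case True
  then have "pmf (map_pmf fst P) x \<noteq> 0" by (simp add: set_pmf_eq')
  then show ?thesis using True by (simp add: pmf_cond_snd_pmf)
next
  case False
  then have "(x, y) \<notin> set_pmf P" by force
  then show ?thesis using False by (metis mult_zero_left pmf_eq_0_set_pmf)
qed

lemma cond_snd_pmf_map:
  assumes "y \<in> set_pmf (map_pmf h P)"
  shows "cond_snd_pmf (map_pmf (\<lambda>s. (h s, X s)) P) y = map_pmf X (cond_pmf P {s. h s = y})"
proof -
  have "set_pmf P \<inter> (\<lambda>s. (h s, X s)) -` {z. fst z = y} \<noteq> {}" using assms by auto
  then show ?thesis by (simp add: cond_snd_pmf_def cond_map_pmf map_pmf_comp vimage_def)
qed

lemma KL_pmf_chain: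
  assumes Q: "\<And>x y. pmf Q (x, y) = pmf Q1 x * pmf (L x) y"
  shows "KL_pmf P Q = KL_pmf (map_pmf fst P) Q1
           + (\<integral>\<^sup>+x. KL_pmf (cond_snd_pmf P x) (L x) \<partial>measure_pmf (map_pmf fst P))"
proof -
  have "KL_pmf P Q = (\<integral>\<^sup>+x. \<integral>\<^sup>+y. kl_term (pmf P (x, y)) (pmf Q (x, y)) \<partial>count_space UNIV \<partial>count_space UNIV)"
    unfolding KL_pmf_def using nn_integral_fst_count_space[of "\<lambda>z. kl_term (pmf P z) (pmf Q z)"] by simp
  also have "\<dots> = (\<integral>\<^sup>+x. \<integral>\<^sup>+y. kl_term (pmf (map_pmf fst P) x * pmf (cond_snd_pmf P x) y)
                      (pmf Q1 x * pmf (L x) y) \<partial>count_space UNIV \<partial>count_space UNIV)"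
    by (simp add: Q pmf_pair_cond_snd_pmf[of P])
  also have "\<dots> = (\<integral>\<^sup>+x. kl_term (pmf (map_pmf fst P) x) (pmf Q1 x)
                      + ennreal (pmf (map_pmf fst P) x) * KL_pmf (cond_snd_pmf P x) (L x) \<partial>count_space UNIV)"
    by (simp add: nn_integral_kl_term_mult)
  also have "\<dots> = KL_pmf (map_pmf fst P) Q1
                   + (\<integral>\<^sup>+x. KL_pmf (cond_snd_pmf P x) (L x) \<partial>measure_pmf (map_pmf fst P))"
    by (simp add: nn_integral_add KL_pmf_def nn_integral_measure_pmf)
  finally show ?thesis .
qed

lemma KL_pmf_self [simp]: "KL_pmf P P = 0"
  unfolding KL_pmf_def by (simp add: kl_term_self)

lemma pmf_map_inj_on_superset:
  assumes "inj_on \<phi> S" "set_pmf P \<subseteq> S" "x \<in> S"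
  shows "pmf (map_pmf \<phi> P) (\<phi> x) = pmf P x"
proof -
  have "pmf (map_pmf \<phi> P) (\<phi> x) = measure P (\<phi> -` {\<phi> x} \<inter> set_pmf P)"
    by (simp add: pmf_map measure_Int_set_pmf)
  also have "\<phi> -` {\<phi> x} \<inter> set_pmf P = {x} \<inter> set_pmf P"
    using assms by (auto dest: inj_onD)
  finally show ?thesis by (simp add: measure_Int_set_pmf measure_pmf_single)
qed

lemma nn_integral_count_space_UNIV_restrict:
  assumes "\<And>x. x \<notin> S \<Longrightarrow> f x = 0"
  shows "(\<integral>\<^sup>+x. f x \<partial>count_space UNIV) = (\<integral>\<^sup>+x. f x \<partial>count_space S)"
proof -
  have "(\<integral>\<^sup>+x. f x \<partial>count_space S) = (\<integral>\<^sup>+x. f x * indicator S x \<partial>count_space UNIV)"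
    by (rule nn_integral_count_space_indicator) simp
  also have "\<dots> = (\<integral>\<^sup>+x. f x \<partial>count_space UNIV)"
    using assms by (intro nn_integral_cong) (auto simp: indicator_def)
  finally show ?thesis by simp
qed

lemma KL_pmf_map_inj:
  assumes inj: "inj_on \<phi> (set_pmf P \<union> set_pmf Q)"
  shows "KL_pmf (map_pmf \<phi> P) (map_pmf \<phi> Q) = KL_pmf P Q"
proof -
  let ?S = "set_pmf P \<union> set_pmf Q"
  have "KL_pmf (map_pmf \<phi> P) (map_pmf \<phi> Q)
      = (\<integral>\<^sup>+z. kl_term (pmf (map_pmf \<phi> P) z) (pmf (map_pmf \<phi> Q) z) \<partial>count_space (\<phi> ` ?S))"
    unfolding KL_pmf_def
  proof (rule nn_integral_count_space_UNIV_restrict)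
    fix z assume "z \<notin> \<phi> ` ?S"
    then have "z \<notin> set_pmf (map_pmf \<phi> P)" "z \<notin> set_pmf (map_pmf \<phi> Q)" by auto
    then show "kl_term (pmf (map_pmf \<phi> P) z) (pmf (map_pmf \<phi> Q) z) = 0"
      by (simp add: pmf_eq_0_set_pmf[symmetric] kl_term_def del: set_map_pmf)
  qed
  also have "\<dots> = (\<integral>\<^sup>+x. kl_term (pmf (map_pmf \<phi> P) (\<phi> x)) (pmf (map_pmf \<phi> Q) (\<phi> x)) \<partial>count_space ?S)"
    using inj by (intro nn_integral_bij_count_space[symmetric]) (simp add: bij_betw_def)
  also have "\<dots> = (\<integral>\<^sup>+x. kl_term (pmf P x) (pmf Q x) \<partial>count_space ?S)"
    using inj by (intro nn_integral_cong) (simp add: pmf_map_inj_on_superset[of \<phi> ?S])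
  also have "\<dots> = KL_pmf P Q"
    unfolding KL_pmf_def
    by (rule nn_integral_count_space_UNIV_restrict[symmetric])
      (simp add: pmf_eq_0_set_pmf[symmetric] kl_term_def)
  finally show ?thesis .
qed

section \<open>Mutual information and total correlation\<close>

lemma KL_pmf_pair_cond:
  assumes Q: "\<And>v w. pmf Q (v, w) = pmf (map_pmf h P) v * pmf (L v) w"
  shows "KL_pmf (map_pmf (\<lambda>s. (h s, U s)) P) Q
     = (\<integral>\<^sup>+v. KL_pmf (map_pmf U (cond_pmf P {s. h s = v})) (L v) \<partial>measure_pmf (map_pmf h P))"
proof -
  have fst: "map_pmf fst (map_pmf (\<lambda>s. (h s, U s)) P) = map_pmf h P" by (simp add: map_pmf_comp)
  have "KL_pmf (map_pmf (\<lambda>s. (h s, U s)) P) Q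
      = (\<integral>\<^sup>+v. KL_pmf (cond_snd_pmf (map_pmf (\<lambda>s. (h s, U s)) P) v) (L v) \<partial>measure_pmf (map_pmf h P))"
    using KL_pmf_chain[of Q "map_pmf h P" L, OF Q] by (simp add: fst)
  also have "\<dots> = (\<integral>\<^sup>+v. KL_pmf (map_pmf U (cond_pmf P {s. h s = v})) (L v) \<partial>measure_pmf (map_pmf h P))"
    by (intro nn_integral_cong_AE) (simp add: AE_measure_pmf_iff cond_snd_pmf_map del: set_map_pmf)
  finally show ?thesis .
qed

lemma mutual_info_pmf_commute: "mutual_info_pmf P f g = mutual_info_pmf P g f"
proof -
  let ?swap = "\<lambda>(x, y). (y, x)"
  have "mutual_info_pmf P f g = KL_pmf (map_pmf ?swap (map_pmf (\<lambda>s. (f s, g s)) P))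
          (map_pmf ?swap (pair_pmf (map_pmf f P) (map_pmf g P)))"
    unfolding mutual_info_pmf_def by (rule KL_pmf_map_inj[symmetric]) (auto simp: inj_on_def)
  also have "map_pmf ?swap (pair_pmf (map_pmf f P) (map_pmf g P)) = pair_pmf (map_pmf g P) (map_pmf f P)"
    by (rule pair_commute_pmf[symmetric])
  finally show ?thesis by (simp add: mutual_info_pmf_def map_pmf_comp)
qed

lemma mutual_info_pmf_inj_reparam:
  assumes "inj_on \<phi> (g ` set_pmf P)"
  shows "mutual_info_pmf P f (\<lambda>s. \<phi> (g s)) = mutual_info_pmf P f g"
proof -
  let ?m = "\<lambda>(a, b). (a, \<phi> b)"
  have "mutual_info_pmf P f g = KL_pmf (map_pmf ?m (map_pmf (\<lambda>s. (f s, g s)) P))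
          (map_pmf ?m (pair_pmf (map_pmf f P) (map_pmf g P)))"
    unfolding mutual_info_pmf_def using assms by (intro KL_pmf_map_inj[symmetric]) (auto simp: inj_on_def)
  also have "map_pmf ?m (pair_pmf (map_pmf f P) (map_pmf g P)) = pair_pmf (map_pmf f P) (map_pmf (\<lambda>s. \<phi> (g s)) P)"
    using map_pair[of id \<phi> "map_pmf f P" "map_pmf g P"] by (simp add: map_pmf_comp map_prod_def)
  finally show ?thesis by (simp add: mutual_info_pmf_def map_pmf_comp)
qed

definition cond_mutual_info_pmf :: "'s pmf \<Rightarrow> ('s \<Rightarrow> 'a) \<Rightarrow> ('s \<Rightarrow> 'b) \<Rightarrow> ('s \<Rightarrow> 'c) \<Rightarrow> ennreal" where
  "cond_mutual_info_pmf P f g h =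
     (\<integral>\<^sup>+v. mutual_info_pmf (cond_pmf P {s. h s = v}) f g \<partial>measure_pmf (map_pmf h P))"

lemma KL_pmf_pair_snd_marginal:
  "KL_pmf (map_pmf (\<lambda>s. (f s, g s)) R) (pair_pmf A (map_pmf g R))
     = KL_pmf (map_pmf f R) A + mutual_info_pmf R f g"
proof -
  let ?R = "map_pmf (\<lambda>s. (f s, g s)) R"
  have fst: "map_pmf fst ?R = map_pmf f R" by (simp add: map_pmf_comp)
  have "KL_pmf ?R (pair_pmf B (map_pmf g R)) = KL_pmf (map_pmf f R) B
          + (\<integral>\<^sup>+u. KL_pmf (cond_snd_pmf ?R u) (map_pmf g R) \<partial>measure_pmf (map_pmf f R))" for B
    using KL_pmf_chain[of "pair_pmf B (map_pmf g R)" B "\<lambda>_. map_pmf g R" ?R] by (simp add: pmf_pair fst)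
  from this[of A] this[of "map_pmf f R"] show ?thesis by (simp add: mutual_info_pmf_def)
qed

lemma mutual_info_pmf_chain:
  "mutual_info_pmf P f (\<lambda>s. (h s, g s)) = mutual_info_pmf P f h + cond_mutual_info_pmf P f g h"
proof -
  let ?B = "map_pmf (\<lambda>s. (h s, g s)) P"
  let ?\<sigma> = "\<lambda>(u::'b, (v::'c, w::'d)). (v, (u, w))"
  let ?Q = "map_pmf ?\<sigma> (pair_pmf (map_pmf f P) ?B)"
  let ?L = "\<lambda>v. pair_pmf (map_pmf f P) (cond_snd_pmf ?B v)"
  have inj: "inj ?\<sigma>" by (auto simp: inj_def)
  have fst: "map_pmf fst ?B = map_pmf h P" by (simp add: map_pmf_comp)
  have Q: "pmf ?Q (v, (u, w)) = pmf (map_pmf h P) v * pmf (?L v) (u, w)" for v u w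
  proof -
    have "pmf ?Q (v, (u, w)) = pmf ?Q (?\<sigma> (u, (v, w)))" by simp
    also have "\<dots> = pmf (pair_pmf (map_pmf f P) ?B) (u, (v, w))" by (rule pmf_map_inj'[OF inj])
    finally show ?thesis by (simp add: pmf_pair pmf_pair_cond_snd_pmf[of ?B v w] fst)
  qed
  have "mutual_info_pmf P f (\<lambda>s. (h s, g s)) = KL_pmf (map_pmf ?\<sigma> (map_pmf (\<lambda>s. (f s, (h s, g s))) P)) ?Q"
    unfolding mutual_info_pmf_def by (rule KL_pmf_map_inj[symmetric]) (use inj in \<open>auto simp: inj_on_def inj_def\<close>)
  also have "map_pmf ?\<sigma> (map_pmf (\<lambda>s. (f s, (h s, g s))) P) = map_pmf (\<lambda>s. (h s, (f s, g s))) P"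
    by (simp add: map_pmf_comp)
  also have "KL_pmf \<dots> ?Q = (\<integral>\<^sup>+v. KL_pmf (map_pmf (\<lambda>s. (f s, g s)) (cond_pmf P {s. h s = v})) (?L v)
                             \<partial>measure_pmf (map_pmf h P))"
    by (rule KL_pmf_pair_cond) (use Q in auto)
  also have "\<dots> = (\<integral>\<^sup>+v. KL_pmf (map_pmf f (cond_pmf P {s. h s = v})) (map_pmf f P)
                   + mutual_info_pmf (cond_pmf P {s. h s = v}) f g \<partial>measure_pmf (map_pmf h P))"
    by (intro nn_integral_cong_AE)
      (simp add: AE_measure_pmf_iff cond_snd_pmf_map KL_pmf_pair_snd_marginal del: set_map_pmf)
  also have "\<dots> = (\<integral>\<^sup>+v. KL_pmf (map_pmf f (cond_pmf P {s. h s = v})) (map_pmf f P) \<partial>measure_pmf (map_pmf h P))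
                   + cond_mutual_info_pmf P f g h"
    unfolding cond_mutual_info_pmf_def by (simp add: nn_integral_add)
  also have "(\<integral>\<^sup>+v. KL_pmf (map_pmf f (cond_pmf P {s. h s = v})) (map_pmf f P) \<partial>measure_pmf (map_pmf h P))
      = mutual_info_pmf P h f"
    unfolding mutual_info_pmf_def by (rule KL_pmf_pair_cond[symmetric]) (simp add: pmf_pair)
  finally show ?thesis by (simp only: mutual_info_pmf_commute[of P h f])
qed

lemma mutual_info_pmf_const: "mutual_info_pmf P f (\<lambda>s. c) = 0"
  unfolding mutual_info_pmf_def by (simp add: pair_return_pmf2 map_pmf_comp)

lemma proj_empty: "proj {} = (\<lambda>s a. undefined)"
  by (simp add: proj_def fun_eq_iff)

lemma total_cor_empty: "total_cor P {} = 0"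
  unfolding total_cor_def by (simp add: proj_empty)

lemma map_pmf_Pi_pmf_insert_proj:
  assumes fin: "finite A" and a: "a \<notin> A"
  shows "map_pmf (\<lambda>f. (proj A f, f a)) (Pi_pmf (insert a A) undefined M)
       = pair_pmf (Pi_pmf A undefined M) (M a)"
proof -
  have "map_pmf (\<lambda>f. (proj A f, f a)) (Pi_pmf (insert a A) undefined M)
      = map_pmf (\<lambda>(y, f). (proj A (f(a := y)), y)) (pair_pmf (M a) (Pi_pmf A undefined M))"
    using fin a by (simp add: Pi_pmf_insert map_pmf_comp case_prod_unfold)
  also have "\<dots> = map_pmf (\<lambda>(y, f). (f, y)) (pair_pmf (M a) (Pi_pmf A undefined M))"
  proof -
    have "proj A (f(a := y)) = f" if "f \<in> set_pmf (Pi_pmf A undefined M)" for f y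
      using that set_Pi_pmf_subset[of A undefined M] fin a by (auto simp: proj_def fun_eq_iff)
    then show ?thesis by (intro map_pmf_cong) auto
  qed
  also have "\<dots> = pair_pmf (Pi_pmf A undefined M) (M a)" by (rule pair_commute_pmf[symmetric])
  finally show ?thesis .
qed

lemma total_cor_insert:
  assumes fin: "finite A" and a: "a \<notin> A"
  shows "total_cor P (insert a A) = total_cor P A + mutual_info_pmf P (\<lambda>s. s a) (proj A)"
proof -
  let ?M = "\<lambda>a. map_pmf (\<lambda>s. s a) P"
  let ?D = "{f. \<forall>x. x \<notin> insert a A \<longrightarrow> f x = undefined}"
  let ?\<psi> = "\<lambda>f. (proj A f, f a)"
  have inj: "inj_on ?\<psi> ?D"
  proof (rule inj_onI)
    fix f g assume "f \<in> ?D" "g \<in> ?D" "?\<psi> f = ?\<psi> g"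
    then show "f = g" by (auto simp: proj_def fun_eq_iff) metis
  qed
  have "set_pmf (map_pmf (proj (insert a A)) P) \<subseteq> ?D" by (auto simp: proj_def)
  moreover have "set_pmf (Pi_pmf (insert a A) undefined ?M) \<subseteq> ?D"
    using set_Pi_pmf_subset[of "insert a A" undefined ?M] fin by auto
  ultimately have "total_cor P (insert a A) = KL_pmf (map_pmf ?\<psi> (map_pmf (proj (insert a A)) P))
                     (map_pmf ?\<psi> (Pi_pmf (insert a A) undefined ?M))"
    unfolding total_cor_def by (intro KL_pmf_map_inj[symmetric] inj_on_subset[OF inj]) auto
  also have "map_pmf ?\<psi> (map_pmf (proj (insert a A)) P) = map_pmf (\<lambda>s. (proj A s, s a)) P"
    unfolding map_pmf_comp by (rule arg_cong[where f = "\<lambda>g. map_pmf g P"]) (auto simp: proj_def fun_eq_iff)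
  also have "map_pmf ?\<psi> (Pi_pmf (insert a A) undefined ?M) = pair_pmf (Pi_pmf A undefined ?M) (?M a)"
    using fin a by (rule map_pmf_Pi_pmf_insert_proj)
  finally show ?thesis
    by (simp add: KL_pmf_pair_snd_marginal total_cor_def mutual_info_pmf_commute[of P "proj A"])
qed

lemma mutual_info_pmf_proj_Un:
  "mutual_info_pmf P f (proj (B \<union> T))
     = mutual_info_pmf P f (proj B) + cond_mutual_info_pmf P f (proj T) (proj B)"
proof -
  let ?\<phi> = "\<lambda>(u, v) x. if x \<in> B then u x else v x"
  have eq: "proj (B \<union> T) = (\<lambda>s. ?\<phi> (proj B s, proj T s))" by (auto simp: proj_def fun_eq_iff)
  have inj: "inj_on ?\<phi> ((\<lambda>s. (proj B s, proj T s)) ` set_pmf P)"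
  proof (rule inj_onI, clarsimp)
    fix s t assume e: "(\<lambda>x. if x \<in> B then proj B s x else proj T s x) = (\<lambda>x. if x \<in> B then proj B t x else proj T t x)"
    have "s x = t x" if "x \<in> B \<or> x \<in> T" for x using fun_cong[OF e, of x] that by (auto simp: proj_def split: if_splits)
    then show "proj B s = proj B t \<and> proj T s = proj T t" by (auto simp: proj_def fun_eq_iff)
  qed
  have "mutual_info_pmf P f (proj (B \<union> T)) = mutual_info_pmf P f (\<lambda>s. (proj B s, proj T s))"
    unfolding eq by (rule mutual_info_pmf_inj_reparam[OF inj])
  then show ?thesis by (simp add: mutual_info_pmf_chain)
qed

lemma cond_total_cor_insert:
  assumes "finite A" "a \<notin> A"
  shows "cond_total_cor P (insert a A) B
       = cond_total_cor P A B + cond_mutual_info_pmf P (\<lambda>s. s a) (proj A) (proj B)"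
  unfolding cond_total_cor_def cond_mutual_info_pmf_def
  using assms by (simp add: total_cor_insert nn_integral_add)

lemma cond_total_cor_empty: "cond_total_cor P {} B = 0"
  unfolding cond_total_cor_def by (simp add: total_cor_empty)

lemma cond_mutual_info_pmf_proj_empty: "cond_mutual_info_pmf P f (proj {}) h = 0"
  unfolding cond_mutual_info_pmf_def by (simp add: proj_empty mutual_info_pmf_const)

section \<open>Uniform averages over subsets\<close>

lemma avg_cong: "(\<And>x. x \<in> F \<Longrightarrow> f x = g x) \<Longrightarrow> avg F f = avg F g"
  unfolding avg_def by (simp cong: sum.cong)

lemma avg_add: "avg F (\<lambda>x. f x + g x) = avg F f + avg F g"
  unfolding avg_def by (simp add: sum.distrib add_divide_distrib_ennreal)

lemma avg_const: "finite F \<Longrightarrow> F \<noteq> {} \<Longrightarrow> avg F (\<lambda>_. c) = c"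
  unfolding avg_def by (simp add: mult.commute[of _ c] ennreal_mult_divide_eq)

lemma avg_reindex:
  assumes "bij_betw f D E"
  shows "avg D (\<lambda>x. h (f x)) = avg E h"
  using assms unfolding avg_def by (simp add: sum.reindex_bij_betw bij_betw_same_card)

lemma avg_fiber:
  assumes D: "finite D" and E: "finite E" and f: "\<And>x. x \<in> D \<Longrightarrow> f x \<in> E"
    and fiber: "\<And>e. e \<in> E \<Longrightarrow> card {x\<in>D. f x = e} = c" and c: "c > 0"
  shows "avg D (\<lambda>x. h (f x)) = avg E h"
proof -
  have "(\<Sum>x\<in>D. h (f x)) = (\<Sum>e\<in>E. \<Sum>x\<in>{x\<in>D. f x = e}. h (f x))"
    using D E f by (intro sum.group[symmetric]) auto
  also have "\<dots> = (\<Sum>e\<in>E. h e) * of_nat c"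
    using fiber by (simp add: sum_distrib_left mult.commute)
  finally have sum: "(\<Sum>x\<in>D. h (f x)) = (\<Sum>e\<in>E. h e) * of_nat c" .
  have "card D = (\<Sum>e\<in>E. card {x\<in>D. f x = e})"
    using D E f card_eq_sum[of D] sum.group[of D E f "\<lambda>_. 1::nat"] by (simp add: image_subsetI)
  then have card: "card D = card E * c" using fiber by simp
  show ?thesis unfolding avg_def sum card of_nat_mult using c by (intro divide_mult_eq) auto
qed

lemma avg_Sigma:
  assumes X: "finite X" and Y: "\<And>x. x \<in> X \<Longrightarrow> card (Y x) = c" and c: "c > 0"
  shows "avg X (\<lambda>x. avg (Y x) (h x)) = avg (Sigma X Y) (\<lambda>z. h (fst z) (snd z))"
proof -
  have fin: "finite (Y x)" if "x \<in> X" for x using Y[OF that] c card_ge_0_finite by auto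
  have "avg X (\<lambda>x. avg (Y x) (h x)) = (\<Sum>x\<in>X. \<Sum>y\<in>Y x. h x y) * inverse (of_nat c * of_nat (card X))"
    unfolding avg_def divide_ennreal_def using Y
    by (simp add: sum_distrib_right ennreal_inverse_mult of_nat_less_top mult.assoc)
  also have "(\<Sum>x\<in>X. \<Sum>y\<in>Y x. h x y) = (\<Sum>z\<in>Sigma X Y. h (fst z) (snd z))"
    using X fin by (simp add: sum.Sigma split_beta)
  also have "of_nat c * of_nat (card X) = (of_nat (card (Sigma X Y)) :: ennreal)"
    using X fin Y by (simp add: card_SigmaI mult.commute)
  finally show ?thesis unfolding avg_def divide_ennreal_def .
qed

lemma avg_swap:
  assumes "finite X" "finite X'"
    and "\<And>x. x \<in> X \<Longrightarrow> card (Y x) = c" "\<And>y. y \<in> X' \<Longrightarrow> card (Y' y) = c'" "c > 0" "c' > 0"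
    and "\<And>x y. x \<in> X \<and> y \<in> Y x \<longleftrightarrow> y \<in> X' \<and> x \<in> Y' y"
  shows "avg X (\<lambda>x. avg (Y x) (h x)) = avg X' (\<lambda>y. avg (Y' y) (\<lambda>x. h x y))"
proof -
  have "z \<in> Sigma X' Y' \<longleftrightarrow> prod.swap z \<in> Sigma X Y" for z
    using assms(7)[of "snd z" "fst z"] by (cases z) auto
  then have "bij_betw prod.swap (Sigma X Y) (Sigma X' Y')"
    by (intro bij_betwI[where g = prod.swap]) auto
  then have "avg (Sigma X Y) (\<lambda>z. h (fst z) (snd z)) = avg (Sigma X' Y') (\<lambda>z. h (snd z) (fst z))"
    using avg_reindex[of prod.swap "Sigma X Y" "Sigma X' Y'" "\<lambda>z. h (snd z) (fst z)"] by simp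
  with assms show ?thesis by (simp add: avg_Sigma)
qed

definition ksubsets :: "'a set \<Rightarrow> nat \<Rightarrow> 'a set set" where
  "ksubsets R k = {B. B \<subseteq> R \<and> card B = k}"

lemma finite_ksubsets: "finite R \<Longrightarrow> finite (ksubsets R k)"
  unfolding ksubsets_def by (rule finite_subset[of _ "Pow R"]) auto

lemma card_ksubsets: "finite R \<Longrightarrow> card (ksubsets R k) = card R choose k"
  unfolding ksubsets_def by (rule n_subsets)

lemma ksubsetsD: "finite R \<Longrightarrow> B \<in> ksubsets R k \<Longrightarrow> B \<subseteq> R \<and> finite B \<and> card B = k"
  unfolding ksubsets_def by (auto intro: finite_subset)

lemma ksubsets_nonempty: "finite R \<Longrightarrow> k \<le> card R \<Longrightarrow> ksubsets R k \<noteq> {}"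
  using card_ksubsets[of R k] by fastforce

lemma ksubsets_0: "finite R \<Longrightarrow> ksubsets R 0 = {{}}"
  by (auto simp: ksubsets_def finite_subset)

lemma card_Diff_ksubset: "finite R \<Longrightarrow> B \<in> ksubsets R k \<Longrightarrow> card (R - B) = card R - k"
  by (simp add: card_Diff_subset ksubsetsD)

lemma avg_ksubsets_Un:
  assumes R: "finite R" and kj: "k + j \<le> card R"
  shows "avg (ksubsets R (k + j)) h = avg (ksubsets R k) (\<lambda>B. avg (ksubsets (R - B) j) (\<lambda>T. h (B \<union> T)))"
proof -
  let ?D = "Sigma (ksubsets R k) (\<lambda>B. ksubsets (R - B) j)"
  have "avg (ksubsets R k) (\<lambda>B. avg (ksubsets (R - B) j) (\<lambda>T. h (B \<union> T))) = avg ?D (\<lambda>z. h (fst z \<union> snd z))"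
    using R kj by (intro avg_Sigma[where c = "(card R - k) choose j"])
      (auto simp: finite_ksubsets card_ksubsets card_Diff_ksubset)
  also have "\<dots> = avg (ksubsets R (k + j)) h"
  proof (rule avg_fiber)
    show "finite ?D" "finite (ksubsets R (k + j))" using R by (auto intro!: finite_SigmaI finite_ksubsets)
  next
    fix z assume "z \<in> ?D"
    then obtain B T where z: "z = (B, T)" and B: "B \<in> ksubsets R k" and T: "T \<in> ksubsets (R - B) j"
      by auto
    then have "card (B \<union> T) = k + j"
      using R ksubsetsD[OF R B] ksubsetsD[OF _ T] by (subst card_Un_disjoint) auto
    then show "fst z \<union> snd z \<in> ksubsets R (k + j)"
      using z B T by (auto simp: ksubsets_def)
  next
    fix U assume U: "U \<in> ksubsets R (k + j)"
    have "{z \<in> ?D. fst z \<union> snd z = U} = (\<lambda>B. (B, U - B)) ` ksubsets U k"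
    proof (intro equalityI subsetI)
      fix z assume "z \<in> {z \<in> ?D. fst z \<union> snd z = U}"
      then show "z \<in> (\<lambda>B. (B, U - B)) ` ksubsets U k"
        by (auto simp: ksubsets_def image_iff)
    next
      fix z assume "z \<in> (\<lambda>B. (B, U - B)) ` ksubsets U k"
      then show "z \<in> {z \<in> ?D. fst z \<union> snd z = U}"
        using R U by (auto simp: ksubsets_def card_Diff_subset finite_subset)
    qed
    moreover have "inj_on (\<lambda>B. (B, U - B)) (ksubsets U k)" by (auto simp: inj_on_def)
    ultimately show "card {z \<in> ?D. fst z \<union> snd z = U} = (k + j) choose k"
      using R U by (simp add: card_image card_ksubsets ksubsetsD)
  qed simp
  finally show ?thesis by simp
qed

lemma avg_ksubsets_disjoint_swap:
  assumes "finite R" "p + q \<le> card R"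
  shows "avg (ksubsets R p) (\<lambda>A. avg (ksubsets (R - A) q) (h A))
       = avg (ksubsets R q) (\<lambda>B. avg (ksubsets (R - B) p) (\<lambda>A. h A B))"
  using assms
  by (intro avg_swap[where c = "(card R - p) choose q" and c' = "(card R - q) choose p"])
    (auto simp: finite_ksubsets card_ksubsets card_Diff_ksubset, auto simp: ksubsets_def)

lemma avg_ksubsets_point_complement:
  assumes "finite R" "n < card R"
  shows "avg (ksubsets R n) (\<lambda>T. avg (R - T) (\<lambda>a. g a T))
       = avg R (\<lambda>a. avg (ksubsets (R - {a}) n) (g a))"
  using assms
  by (intro avg_swap[where c = "card R - n" and c' = "(card R - 1) choose n"])
    (auto simp: finite_ksubsets card_ksubsets card_Diff_ksubset, auto simp: ksubsets_def)

lemma avg_ksubsets_Suc_pointed: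
  assumes R: "finite R" and n: "n < card R"
  shows "avg (ksubsets R (Suc n)) (\<lambda>A. avg A (\<lambda>a. g a (A - {a})))
       = avg R (\<lambda>a. avg (ksubsets (R - {a}) n) (g a))"
proof -
  let ?D = "Sigma (ksubsets R (Suc n)) (\<lambda>A. A)"
  let ?E = "Sigma R (\<lambda>a. ksubsets (R - {a}) n)"
  have "bij_betw (\<lambda>(A, a). (a, A - {a})) ?D ?E"
  proof (rule bij_betwI[where g = "\<lambda>(a, T). (insert a T, a)"])
    show "(\<lambda>(A, a). (a, A - {a})) \<in> ?D \<rightarrow> ?E"
      using R by (auto simp: ksubsets_def finite_subset)
    show "(\<lambda>(a, T). (insert a T, a)) \<in> ?E \<rightarrow> ?D"
      using R by (auto simp: ksubsets_def finite_subset card_insert_if)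
  qed (auto simp: ksubsets_def)
  then have "avg ?D (\<lambda>z. g (snd z) (fst z - {snd z})) = avg ?E (\<lambda>z. g (fst z) (snd z))"
    using avg_reindex[of "\<lambda>(A, a). (a, A - {a})" ?D ?E "\<lambda>z. g (fst z) (snd z)"] by (simp add: case_prod_beta)
  moreover have "avg (ksubsets R (Suc n)) (\<lambda>A. avg A (\<lambda>a. g a (A - {a}))) = avg ?D (\<lambda>z. g (snd z) (fst z - {snd z}))"
    using R by (intro avg_Sigma[where c = "Suc n"]) (auto simp: finite_ksubsets ksubsets_def)
  moreover have "avg R (\<lambda>a. avg (ksubsets (R - {a}) n) (g a)) = avg ?E (\<lambda>z. g (fst z) (snd z))"
    using R n by (intro avg_Sigma[where c = "(card R - 1) choose n"]) (auto simp: card_ksubsets)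
  ultimately show ?thesis by simp
qed

section \<open>Averaged information quantities\<close>

definition avg_mutual_info :: "(nat \<Rightarrow> 'x) pmf \<Rightarrow> nat \<Rightarrow> nat \<Rightarrow> ennreal" where
  "avg_mutual_info P m t =
     avg {..<m} (\<lambda>i. avg (ksubsets ({..<m} - {i}) t) (\<lambda>T. mutual_info_pmf P (\<lambda>s. s i) (proj T)))"

definition avg_cond_mutual_info :: "(nat \<Rightarrow> 'x) pmf \<Rightarrow> nat \<Rightarrow> nat \<Rightarrow> nat \<Rightarrow> ennreal" where
  "avg_cond_mutual_info P m j k =
     avg {..<m} (\<lambda>i. avg (ksubsets ({..<m} - {i}) k) (\<lambda>B. avg (ksubsets ({..<m} - {i} - B) j)
       (\<lambda>T. cond_mutual_info_pmf P (\<lambda>s. s i) (proj T) (proj B))))"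

definition avg_cond_total_cor :: "(nat \<Rightarrow> 'x) pmf \<Rightarrow> nat \<Rightarrow> nat \<Rightarrow> nat \<Rightarrow> ennreal" where
  "avg_cond_total_cor P m n k =
     avg (ksubsets {..<m} n) (\<lambda>A. avg (ksubsets ({..<m} - A) k) (\<lambda>B. cond_total_cor P A B))"

lemma avg_ksubsets_mutual_info_add:
  assumes R: "finite R" and kj: "k + j \<le> card R"
  shows "avg (ksubsets R (k + j)) (\<lambda>T. mutual_info_pmf P f (proj T))
       = avg (ksubsets R k) (\<lambda>B. mutual_info_pmf P f (proj B))
         + avg (ksubsets R k) (\<lambda>B. avg (ksubsets (R - B) j) (\<lambda>T. cond_mutual_info_pmf P f (proj T) (proj B)))"
proof -
  let ?I = "\<lambda>T. mutual_info_pmf P f (proj T)"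
  let ?J = "\<lambda>B T. cond_mutual_info_pmf P f (proj T) (proj B)"
  have "avg (ksubsets R (k + j)) ?I = avg (ksubsets R k) (\<lambda>B. avg (ksubsets (R - B) j) (\<lambda>T. ?I (B \<union> T)))"
    using R kj by (rule avg_ksubsets_Un)
  also have "\<dots> = avg (ksubsets R k) (\<lambda>B. ?I B + avg (ksubsets (R - B) j) (?J B))"
  proof (rule avg_cong)
    fix B assume "B \<in> ksubsets R k"
    then have "ksubsets (R - B) j \<noteq> {}"
      using R kj by (intro ksubsets_nonempty) (auto simp: card_Diff_ksubset)
    then show "avg (ksubsets (R - B) j) (\<lambda>T. ?I (B \<union> T)) = ?I B + avg (ksubsets (R - B) j) (?J B)"
      using R by (simp add: mutual_info_pmf_proj_Un avg_add avg_const finite_ksubsets)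
  qed
  finally show ?thesis by (simp add: avg_add)
qed

lemma avg_mutual_info_add:
  "k + j < m \<Longrightarrow> avg_mutual_info P m (k + j) = avg_mutual_info P m k + avg_cond_mutual_info P m j k"
  unfolding avg_mutual_info_def avg_cond_mutual_info_def
  by (subst avg_add[symmetric], intro avg_cong avg_ksubsets_mutual_info_add) auto

lemma avg_ksubsets_cond_total_cor_Suc:
  assumes R: "finite R" and n: "n < card R"
  shows "avg (ksubsets R (Suc n)) (\<lambda>A. cond_total_cor P A B)
       = avg (ksubsets R n) (\<lambda>T. cond_total_cor P T B)
         + avg R (\<lambda>a. avg (ksubsets (R - {a}) n) (\<lambda>T. cond_mutual_info_pmf P (\<lambda>s. s a) (proj T) (proj B)))"
proof -
  let ?J = "\<lambda>a T. cond_mutual_info_pmf P (\<lambda>s. s a) (proj T) (proj B)"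
  have "avg (ksubsets R (Suc n)) (\<lambda>A. cond_total_cor P A B)
      = avg (ksubsets R (Suc n)) (\<lambda>A. avg A (\<lambda>a. cond_total_cor P (A - {a}) B + ?J a (A - {a})))"
  proof (rule avg_cong)
    fix A assume "A \<in> ksubsets R (Suc n)"
    then have A: "finite A" "A \<noteq> {}" using R by (auto dest: ksubsetsD)
    have "cond_total_cor P (A - {a}) B + ?J a (A - {a}) = cond_total_cor P A B" if "a \<in> A" for a
      using A that cond_total_cor_insert[of "A - {a}" a P B] by (simp add: insert_absorb)
    then show "cond_total_cor P A B = avg A (\<lambda>a. cond_total_cor P (A - {a}) B + ?J a (A - {a}))"
      using A by (simp add: avg_cong[of A] avg_const)
  qed
  also have "\<dots> = avg R (\<lambda>a. avg (ksubsets (R - {a}) n) (\<lambda>T. cond_total_cor P T B + ?J a T))"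
    using R n by (rule avg_ksubsets_Suc_pointed)
  also have "\<dots> = avg R (\<lambda>a. avg (ksubsets (R - {a}) n) (\<lambda>T. cond_total_cor P T B))
                 + avg R (\<lambda>a. avg (ksubsets (R - {a}) n) (?J a))"
    by (simp add: avg_add)
  also have "avg R (\<lambda>a. avg (ksubsets (R - {a}) n) (\<lambda>T. cond_total_cor P T B))
      = avg (ksubsets R n) (\<lambda>T. avg (R - T) (\<lambda>a. cond_total_cor P T B))"
    using R n by (rule avg_ksubsets_point_complement[symmetric])
  also have "\<dots> = avg (ksubsets R n) (\<lambda>T. cond_total_cor P T B)"
  proof (rule avg_cong)
    fix T assume "T \<in> ksubsets R n"
    then have "R - T \<noteq> {}" using R n by (auto dest: ksubsetsD)
    then show "avg (R - T) (\<lambda>a. cond_total_cor P T B) = cond_total_cor P T B" using R by (simp add: avg_const)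
  qed
  finally show ?thesis .
qed

lemma avg_cond_total_cor_Suc:
  assumes "Suc n + k \<le> m"
  shows "avg_cond_total_cor P m (Suc n) k = avg_cond_total_cor P m n k + avg_cond_mutual_info P m n k"
proof -
  define M where "M = {..<m}"
  let ?J = "\<lambda>a B T. cond_mutual_info_pmf P (\<lambda>s. s a) (proj T) (proj B)"
  have M: "finite M" "card M = m" by (simp_all add: M_def)
  have swap: "avg (ksubsets M t) (\<lambda>A. avg (ksubsets (M - A) k) (\<lambda>B. cond_total_cor P A B))
      = avg (ksubsets M k) (\<lambda>B. avg (ksubsets (M - B) t) (\<lambda>A. cond_total_cor P A B))" if "t \<le> Suc n" for t
    using M assms that by (intro avg_ksubsets_disjoint_swap) auto
  have "avg_cond_total_cor P m (Suc n) k
      = avg (ksubsets M k) (\<lambda>B. avg (ksubsets (M - B) n) (\<lambda>T. cond_total_cor P T B)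
          + avg (M - B) (\<lambda>a. avg (ksubsets (M - B - {a}) n) (?J a B)))"
    unfolding avg_cond_total_cor_def M_def[symmetric] swap[OF order_refl]
    using M assms by (intro avg_cong avg_ksubsets_cond_total_cor_Suc) (auto simp: card_Diff_ksubset)
  also have "\<dots> = avg_cond_total_cor P m n k
      + avg (ksubsets M k) (\<lambda>B. avg (M - B) (\<lambda>a. avg (ksubsets (M - B - {a}) n) (?J a B)))"
    unfolding avg_add avg_cond_total_cor_def M_def[symmetric] swap[OF le_SucI[OF order_refl]] ..
  also have "avg (ksubsets M k) (\<lambda>B. avg (M - B) (\<lambda>a. avg (ksubsets (M - B - {a}) n) (?J a B)))
      = avg_cond_mutual_info P m n k"
    unfolding avg_cond_mutual_info_def M_def[symmetric]
    using M assms by (subst avg_ksubsets_point_complement) (auto simp: Diff_insert[symmetric] Diff_insert2[symmetric])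
  finally show ?thesis .
qed

lemma avg_cond_total_cor_0: "avg_cond_total_cor P m 0 k = 0"
  by (simp add: avg_cond_total_cor_def ksubsets_0 avg_def cond_total_cor_empty)

lemma avg_cond_mutual_info_0: "avg_cond_mutual_info P m 0 k = 0"
  by (simp add: avg_cond_mutual_info_def ksubsets_0 avg_def cond_mutual_info_pmf_proj_empty)

lemma avg_cond_total_cor_eq_sum:
  "n + k \<le> m \<Longrightarrow> avg_cond_total_cor P m n k = (\<Sum>j<n. avg_cond_mutual_info P m j k)"
  by (induction n) (simp_all add: avg_cond_total_cor_0 avg_cond_total_cor_Suc)

section \<open>The averaging argument\<close>

lemma sum_shifted_differences:
  fixes f :: "nat \<Rightarrow> real"
  shows "(\<Sum>k<K+1. f (k + j) - f k) = (\<Sum>l<j. f (l + K + 1) - f l)"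
proof -
  have "(\<Sum>k<K+1. f (k + j) - f k) = (\<Sum>k<K+1. \<Sum>l<j. f (k + Suc l) - f (k + l))"
    by (intro sum.cong refl) (subst sum_lessThan_telescope[where f = "\<lambda>l. f (_ + l)"], simp)
  also have "\<dots> = (\<Sum>l<j. \<Sum>k<K+1. f (l + Suc k) - f (l + k))"
    by (subst sum.swap) (simp add: add_ac)
  also have "\<dots> = (\<Sum>l<j. f (l + K + 1) - f l)"
    by (intro sum.cong refl) (subst sum_lessThan_telescope[where f = "\<lambda>k. f (_ + k)"], simp)
  finally show ?thesis .
qed

text \<open>Averaging over k \<le> K: the n increments f(k+j) - f(k), j < n, summed over k telescope
  to at most n(n-1)/2 values of f, each at most f(n + K - 1).\<close>
lemma exists_small_increment_sum:
  fixes f :: "nat \<Rightarrow> real"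
  assumes n: "n \<ge> 1"
    and mono: "\<And>s t. s \<le> t \<Longrightarrow> t \<le> n + K - 1 \<Longrightarrow> f s \<le> f t"
    and nonneg: "\<And>t. f t \<ge> 0"
  shows "\<exists>k\<le>K. (\<Sum>j<n. f (k + j) - f k) \<le> real (n * (n - 1)) / (2 * (real K + 1)) * f (n + K - 1)"
proof (rule ccontr)
  define N where "N = n + K - 1"
  define c where "c = real (n * (n - 1)) / (2 * (real K + 1))"
  assume "\<not> ?thesis"
  then have gt: "c * f N < (\<Sum>j<n. f (k + j) - f k)" if "k \<le> K" for k
    using that unfolding c_def N_def by (meson not_le)
  have bound: "(\<Sum>l<j. f (l + K + 1) - f l) \<le> (\<Sum>l<j. f N)" if "j < n" for j
  proof (intro sum_mono)
    fix l assume "l \<in> {..<j}"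
    then have "f (l + K + 1) \<le> f N" using that by (intro mono) (auto simp: N_def)
    then show "f (l + K + 1) - f l \<le> f N" using nonneg[of l] by simp
  qed
  have "(\<Sum>j<n'. real j) * 2 = real n' * (real n' - 1)" for n'
    by (induction n') (auto simp: algebra_simps)
  then have "(\<Sum>j<n. real j) = real n * (real n - 1) / 2" by (simp add: field_simps)
  also have "\<dots> = real (K + 1) * c" using n by (simp add: c_def of_nat_diff field_simps)
  finally have "(\<Sum>j<n. real j) = real (K + 1) * c" .
  then have "(\<Sum>k<K+1. c * f N) = (\<Sum>j<n. \<Sum>l<j. f N)" by (simp flip: sum_distrib_right)
  also have "\<dots> \<ge> (\<Sum>j<n. \<Sum>k<K+1. f (k + j) - f k)"
    using bound by (intro sum_mono) (simp only: sum_shifted_differences lessThan_iff)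
  also have "(\<Sum>j<n. \<Sum>k<K+1. f (k + j) - f k) = (\<Sum>k<K+1. \<Sum>j<n. f (k + j) - f k)"
    by (rule sum.swap)
  also have "\<dots> > (\<Sum>k<K+1. c * f N)"
    using gt by (intro sum_strict_mono) auto
  finally show False by simp
qed

lemma ennreal_exists_small_increment_sum_finite:
  fixes F :: "nat \<Rightarrow> ennreal" and G :: "nat \<Rightarrow> nat \<Rightarrow> ennreal" and n K :: nat
  defines "N \<equiv> n + K - 1"
  assumes n: "n \<ge> 1"
    and add: "\<And>k j. k + j \<le> N \<Longrightarrow> F (k + j) = F k + G j k"
    and finite: "F N \<noteq> \<infinity>"
  shows "\<exists>k\<le>K. (\<Sum>j<n. G j k) \<le> ennreal (real (n * (n - 1)) / (2 * (real K + 1))) * F N"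
proof -
  define c where "c = real (n * (n - 1)) / (2 * (real K + 1))"
  define f where "f t = enn2real (F t)" for t
  have f_nonneg: "f t \<ge> 0" for t by (simp add: f_def)
  have mono: "F s \<le> F t" if "s \<le> t" "t \<le> N" for s t
    using add[of s "t - s"] that by simp
  have F_eq: "F t = ennreal (f t)" if "t \<le> N" for t
  proof -
    have "F t \<noteq> \<infinity>" using mono[OF that order_refl] finite by (auto simp: top_unique)
    then show ?thesis by (simp add: f_def ennreal_enn2real_if)
  qed
  have f_mono: "f s \<le> f t" if "s \<le> t" "t \<le> N" for s t
    using mono[OF that] F_eq[of s] F_eq[of t] that f_nonneg[of t] by (simp add: ennreal_le_iff)
  have G_eq: "G j k = ennreal (f (k + j) - f k)" if "k + j \<le> N" for j k
  proof -
    have "ennreal (f (k + j)) = ennreal (f k) + G j k"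
      using add[of k j] that F_eq[of k] F_eq[of "k + j"] by simp
    then have "G j k = ennreal (f (k + j)) - ennreal (f k)"
      using ennreal_add_diff_cancel_left[of "ennreal (f k)" "G j k"] by simp
    then show ?thesis using f_nonneg by (simp add: ennreal_minus)
  qed
  obtain k where k: "k \<le> K" and small: "(\<Sum>j<n. f (k + j) - f k) \<le> c * f N"
    using exists_small_increment_sum[of n K f] n f_mono f_nonneg unfolding c_def N_def by blast
  have "(\<Sum>j<n. G j k) = (\<Sum>j<n. ennreal (f (k + j) - f k))"
    using k by (intro sum.cong) (auto simp: G_eq N_def)
  also have "\<dots> = ennreal (\<Sum>j<n. f (k + j) - f k)"
    using k by (intro sum_ennreal) (auto intro: f_mono simp: N_def)
  also have "\<dots> \<le> ennreal (c * f N)" using small by (rule ennreal_leI)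
  also have "\<dots> = ennreal c * F N" using F_eq[of N] f_nonneg[of N] by (simp add: c_def ennreal_mult[symmetric])
  finally show ?thesis using k by (auto simp: c_def)
qed

lemma ennreal_exists_small_increment_sum:
  fixes F :: "nat \<Rightarrow> ennreal" and G :: "nat \<Rightarrow> nat \<Rightarrow> ennreal"
  assumes n: "n \<ge> 1"
    and add: "\<And>k j. k + j \<le> n + K - 1 \<Longrightarrow> F (k + j) = F k + G j k"
    and G0: "\<And>k. G 0 k = 0"
  shows "\<exists>k\<le>K. (\<Sum>j<n. G j k) \<le> ennreal (real (n * (n - 1)) / (2 * (real K + 1))) * F (n + K - 1)"
proof (cases "F (n + K - 1) = \<infinity>")
  case True
  show ?thesis
  proof (cases "n = 1")
    case True
    then show ?thesis using G0 by auto
  next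
    case False
    then have "ennreal (real (n * (n - 1)) / (2 * (real K + 1))) \<noteq> 0" using n by simp
    then have "ennreal (real (n * (n - 1)) / (2 * (real K + 1))) * F (n + K - 1) = \<infinity>"
      using \<open>F (n + K - 1) = \<infinity>\<close> by (simp add: ennreal_mult_top)
    then show ?thesis by (intro exI[of _ 0]) simp
  qed
next
  case False
  then show ?thesis using ennreal_exists_small_increment_sum_finite[OF n add] by blast
qed

theorem mainTheorem4:
  fixes P :: "(nat \<Rightarrow> 'x::countable) pmf" and m n kmax :: nat
  assumes "n \<ge> 1" and "n + kmax \<le> m"
  shows "\<exists>k. k \<le> kmax \<and>
    avg {A. A \<subseteq> {..<m} \<and> card A = n}
      (\<lambda>A. avg {B. B \<subseteq> {..<m} - A \<and> card B = k} (\<lambda>B. cond_total_cor P A B))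
    \<le> ennreal (real (n * (n - 1)) / (2 * (real kmax + 1))) *
      avg {..<m} (\<lambda>i. avg {B'. B' \<subseteq> {..<m} - {i} \<and> card B' = n + kmax - 1}
                        (\<lambda>B'. mutual_info_pmf P (\<lambda>s. s i) (proj B')))"
proof -
  have "avg_mutual_info P m (k + j) = avg_mutual_info P m k + avg_cond_mutual_info P m j k"
    if "k + j \<le> n + kmax - 1" for k j
    using that assms by (intro avg_mutual_info_add) auto
  from ennreal_exists_small_increment_sum[OF assms(1) this avg_cond_mutual_info_0]
  obtain k where "k \<le> kmax" and "(\<Sum>j<n. avg_cond_mutual_info P m j k)
      \<le> ennreal (real (n * (n - 1)) / (2 * (real kmax + 1))) * avg_mutual_info P m (n + kmax - 1)"
    by blast
  moreover have "avg_cond_total_cor P m n k = (\<Sum>j<n. avg_cond_mutual_info P m j k)"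
    using \<open>k \<le> kmax\<close> assms by (intro avg_cond_total_cor_eq_sum) auto
  ultimately show ?thesis
    unfolding avg_cond_total_cor_def avg_mutual_info_def ksubsets_def by auto
qed

end
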